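(* Let $n \geq 2$, let $(x_1,\dots,x_{n+1})$ be the standard coordinates on $\mathbb{R}^{n+1}_1$, and let $F:\mathbb{R}^{n+1}\to\mathbb{R}^{n+1}$, $(y_1,\dots,y_{n+1}) = F(x_1,\dots,x_{n+1})$, be a smooth diffeomorphism, so that $(y_1,\dots,y_{n+1})$ is another (global) coordinate system on $\mathbb{R}^{n+1}_1$. Assume that for every smooth function $\varphi$ on $\mathbb{R}^{n+1}$, $$\sum_{i=1}^n \frac{\partial^2 \varphi}{\partial x_i^2} - \frac{\partial^2 \varphi}{\partial x_{n+1}^2} = 0 \ \text{ everywhere} \iff \sum_{i=1}^n \frac{\partial^2 \varphi}{\partial y_i^2} - \frac{\partial^2 \varphi}{\partial y_{n+1}^2} = 0 \ \text{ everywhere},$$ where in the right-hand side $\varphi$ is expressed in the $y$-coordinates (i.e. one considers $\varphi\circ F^{-1}$ as a function of $y$). For $i=1,\dots,n+1$ let $r_i = \big(\frac{\partial y_i}{\partial x_1},\dots,\frac{\partial y_i}{\partial x_{n+1}}\big)$ be the $i$-th row of the Jacobian matrix $\big(\frac{\partial y_i}{\partial x_j}\big)$. Then at every point: the rows are mutually orthogonal with respect to the Minkowski inner product, i.e. $\langle r_i, r_j\rangle = 0$ for $i \neq j$; they all have the same length, namely $\langle r_i,r_i\rangle = -\langle r_{n+1},r_{n+1}\rangle$ for $1\le i\le n$; and $r_1,\dots,r_n$ are spacelike while $r_{n+1}$ is timelike.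
   Context: $\mathbb{R}^{n+1}_1$ denotes $\mathbb{R}^{n+1}$ with the Minkowski inner product of signature $(+,\dots,+,-)$: $\langle u,v\rangle = \sum_{i=1}^n u_i v_i - u_{n+1}v_{n+1}$. A vector $v$ is spacelike if $\langle v,v\rangle>0$ (or $v=0$), timelike if $\langle v,v\rangle<0$, null if $\langle v,v\rangle = 0$, $v\neq 0$. *)

theory Defs
  imports "HOL-Analysis.Analysis"
begin

text \<open>C-infinity smoothness on the whole space: f is differentiable everywhere and
  every directional-derivative function x |-> Df(x) v is again smooth.\<close>
coinductive smooth :: "('a::real_normed_vector \<Rightarrow> 'b::real_normed_vector) \<Rightarrow> bool" where
  smoothI: "(\<forall>x. f differentiable (at x)) \<Longrightarrow>
            (\<forall>v. smooth (\<lambda>x. frechet_derivative f (at x) v)) \<Longrightarrow> smooth f"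

definition pd :: "'m::finite \<Rightarrow> (real^'m \<Rightarrow> 'b::real_normed_vector) \<Rightarrow> real^'m \<Rightarrow> 'b" where
  "pd i f x = frechet_derivative f (at x) (axis i 1)"

definition mink :: "'m::finite \<Rightarrow> real^'m \<Rightarrow> real^'m \<Rightarrow> real" where
  "mink t u v = (\<Sum>j\<in>UNIV. (if j = t then -1 else 1) * u $ j * v $ j)"

definition spacelike :: "'m::finite \<Rightarrow> real^'m \<Rightarrow> bool" where
  "spacelike t v \<longleftrightarrow> mink t v v > 0 \<or> v = 0"

definition timelike :: "'m::finite \<Rightarrow> real^'m \<Rightarrow> bool" where
  "timelike t v \<longleftrightarrow> mink t v v < 0"

definition wave :: "'m::finite \<Rightarrow> (real^'m \<Rightarrow> real) \<Rightarrow> real^'m \<Rightarrow> real" where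
  "wave t \<phi> x = (\<Sum>i\<in>UNIV. (if i = t then -1 else 1) * pd i (pd i \<phi>) x)"

definition jrow :: "(real^'m::finite \<Rightarrow> real^'m) \<Rightarrow> 'm \<Rightarrow> real^'m \<Rightarrow> real^'m" where
  "jrow F i x = (\<chi> j. pd j (\<lambda>z. F z $ i) x)"

end

theory Submission
  imports Defs
begin

text \<open>
  The proof tests the hypothesis on polynomial solutions.  Linear functions \<open>k \<bullet> x\<close> are
  solutions, and so is \<open>(k \<bullet> x)\<^sup>2\<close> whenever \<open>k\<close> is a null vector.  Pulling both back along
  \<open>G\<close> and applying the product rule \<open>\<box>(u\<^sup>2) = 2 u \<box>u + 2 \<langle>\<nabla>u, \<nabla>u\<rangle>\<close> shows that the quadratic form
  \<open>k \<mapsto> \<langle>DG\<^sup>T k, DG\<^sup>T k\<rangle>\<close> vanishes on the light cone; hence it is a multiple \<open>c\<close> of the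
  Minkowski form, i.e. \<open>DG \<eta> DG\<^sup>T = c \<eta>\<close>.  Since the rows of \<open>DF\<close> are dual to the columns
  of \<open>DG\<close>, this inverts to \<open>c DF \<eta> DF\<^sup>T = \<eta>\<close>.  Finally \<open>c > 0\<close>, because in dimension at
  least three a negative \<open>c\<close> would produce two orthogonal timelike vectors.
\<close>

abbreviation msign :: "'m \<Rightarrow> 'm \<Rightarrow> real" where
  "msign t i \<equiv> if i = t then -1 else 1"

lemma smoothD:
  assumes "smooth f"
  shows "f differentiable (at x)" and "smooth (\<lambda>x. frechet_derivative f (at x) v)"
  using assms by (auto elim: smooth.cases)

lemma smooth_has_derivative:
  "smooth f \<Longrightarrow> (f has_derivative frechet_derivative f (at x)) (at x)"
  using smoothD(1) frechet_derivative_works by blast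

lemma smooth_bounded_linear_comp:
  assumes "smooth f" and L: "bounded_linear L"
  shows "smooth (\<lambda>x. L (f x))"
proof -
  let ?X = "\<lambda>h. \<exists>f. smooth f \<and> h = (\<lambda>x. L (f x))"
  have "?X (\<lambda>x. L (f x))" using assms(1) by blast
  then show ?thesis
  proof (rule smooth.coinduct[of ?X])
    fix h assume "?X h"
    then obtain f where f: "smooth f" and h: "h = (\<lambda>x. L (f x))" by blast
    have der: "(h has_derivative (\<lambda>v. L (frechet_derivative f (at x) v))) (at x)" for x
      unfolding h by (rule bounded_linear.has_derivative[OF L smooth_has_derivative[OF f]])
    have "frechet_derivative h (at x) v = L (frechet_derivative f (at x) v)" for x v
      using frechet_derivative_at[OF der, symmetric] by simp
    then have "\<forall>v. ?X (\<lambda>x. frechet_derivative h (at x) v)"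
      using smoothD(2)[OF f] by auto
    moreover have "\<forall>x. h differentiable (at x)"
      using der by (auto intro: differentiableI)
    ultimately show "\<exists>g. h = g \<and> (\<forall>x. g differentiable (at x)) \<and>
        (\<forall>v. ?X (\<lambda>x. frechet_derivative g (at x) v) \<or> smooth (\<lambda>x. frechet_derivative g (at x) v))"
      by blast
  qed
qed

lemma smooth_pd: "smooth f \<Longrightarrow> smooth (pd i f)"
  unfolding pd_def by (rule smoothD(2))

lemma pd_at: "(f has_derivative f') (at x) \<Longrightarrow> pd i f x = f' (axis i 1)"
  unfolding pd_def by (simp add: frechet_derivative_at[symmetric])

lemma pd_bounded_linear_comp:
  assumes "f differentiable (at x)" and "bounded_linear L"
  shows "pd i (\<lambda>x. L (f x)) x = L (pd i f x)"
  using pd_at[OF bounded_linear.has_derivative[OF assms(2) assms(1)[unfolded frechet_derivative_works]]]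
  by (simp only: pd_def)

lemma pd_mult:
  fixes f g :: "real^'m::finite \<Rightarrow> real"
  assumes "f differentiable (at x)" and "g differentiable (at x)"
  shows "pd i (\<lambda>x. f x * g x) x = f x * pd i g x + pd i f x * g x"
  using pd_at[OF has_derivative_mult[OF assms[unfolded frechet_derivative_works]]]
  by (simp only: pd_def)

lemma wave_square:
  fixes u :: "real^'m::finite \<Rightarrow> real"
  assumes "smooth u"
  shows "wave t (\<lambda>x. u x * u x) x =
    2 * u x * wave t u x + 2 * (\<Sum>i\<in>UNIV. msign t i * pd i u x * pd i u x)"
proof -
  have du: "u differentiable (at x)" for x
    by (rule smoothD(1)[OF assms])
  have dpu: "pd i u differentiable (at x)" for i x
    by (rule smoothD(1)[OF smooth_pd[OF assms]])
  have first: "pd i (\<lambda>x. u x * u x) = (\<lambda>x. u x * pd i u x + pd i u x * u x)" for i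
    by (rule ext, rule pd_mult[OF du du])
  have second: "pd i (pd i (\<lambda>x. u x * u x)) x
      = 2 * u x * pd i (pd i u) x + 2 * pd i u x * pd i u x" for i
  proof -
    have "((\<lambda>x. u x * pd i u x + pd i u x * u x) has_derivative
        (\<lambda>v. u x * frechet_derivative (pd i u) (at x) v + frechet_derivative u (at x) v * pd i u x
           + (pd i u x * frechet_derivative u (at x) v + frechet_derivative (pd i u) (at x) v * u x)))
        (at x)"
      using du dpu unfolding frechet_derivative_works
      by (intro has_derivative_add has_derivative_mult)
    from pd_at[OF this, of i] show ?thesis
      unfolding first by (simp add: pd_def algebra_simps)
  qed
  have "wave t (\<lambda>x. u x * u x) x = (\<Sum>i\<in>UNIV. 2 * u x * (msign t i * pd i (pd i u) x)
      + 2 * (msign t i * pd i u x * pd i u x))"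
    unfolding wave_def second by (rule sum.cong) (auto simp: algebra_simps)
  also have "\<dots> = 2 * u x * (\<Sum>i\<in>UNIV. msign t i * pd i (pd i u) x)
      + 2 * (\<Sum>i\<in>UNIV. msign t i * pd i u x * pd i u x)"
    by (simp only: sum.distrib sum_distrib_left)
  finally show ?thesis
    unfolding wave_def .
qed

lemma smooth_quadratic: "smooth (\<lambda>x::real^'m. a + b \<bullet> x + (c \<bullet> x) * (d \<bullet> x))"
proof -
  let ?X = "\<lambda>f. \<exists>a b c d. f = (\<lambda>x::real^'m. a + b \<bullet> x + (c \<bullet> x) * (d \<bullet> x))"
  have "?X (\<lambda>x. a + b \<bullet> x + (c \<bullet> x) * (d \<bullet> x))" by blast
  then show ?thesis
  proof (rule smooth.coinduct[of ?X])
    fix f assume "?X f"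
    then obtain a b c d where f: "f = (\<lambda>x::real^'m. a + b \<bullet> x + (c \<bullet> x) * (d \<bullet> x))" by blast
    have der: "(f has_derivative (\<lambda>v. b \<bullet> v + ((c \<bullet> x) * (d \<bullet> v) + (c \<bullet> v) * (d \<bullet> x)))) (at x)" for x
      unfolding f by (auto intro!: derivative_eq_intros)
    have "frechet_derivative f (at x) v = b \<bullet> v + ((d \<bullet> v) *\<^sub>R c + (c \<bullet> v) *\<^sub>R d) \<bullet> x" for x v
      using frechet_derivative_at[OF der, symmetric] by (simp add: inner_add_left mult.commute)
    then have "\<forall>v. ?X (\<lambda>x. frechet_derivative f (at x) v)"
      by (intro allI exI[of _ "b \<bullet> _"] exI[of _ "(d \<bullet> _) *\<^sub>R c + (c \<bullet> _) *\<^sub>R d"]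
          exI[of _ 0]) simp
    moreover have "\<forall>x. f differentiable (at x)"
      using der by (auto intro: differentiableI)
    ultimately show "\<exists>g. f = g \<and> (\<forall>x. g differentiable (at x)) \<and>
        (\<forall>v. ?X (\<lambda>x. frechet_derivative g (at x) v) \<or> smooth (\<lambda>x. frechet_derivative g (at x) v))"
      by blast
  qed
qed

lemma pd_linear: "pd i (\<lambda>x::real^'m::finite. k \<bullet> x) x = k $ i"
  using pd_at[of "\<lambda>x. k \<bullet> x" "\<lambda>v. k \<bullet> v" x i] by (simp add: has_derivative_inner_right inner_axis)

lemma wave_linear: "wave t (\<lambda>x::real^'m::finite. k \<bullet> x) x = 0"
proof -
  have "pd i (pd i (\<lambda>x::real^'m. k \<bullet> x)) x = 0" for i
    unfolding pd_linear by (rule pd_at[OF has_derivative_const, simplified])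
  then show ?thesis unfolding wave_def by simp
qed

lemma wave_linear_square: "wave t (\<lambda>x::real^'m::finite. (k \<bullet> x) * (k \<bullet> x)) x = 2 * mink t k k"
proof -
  have "smooth (\<lambda>x::real^'m. k \<bullet> x)"
    using smooth_quadratic[of 0 k 0 0] by simp
  from wave_square[OF this] show ?thesis
    unfolding wave_linear pd_linear mink_def by (simp add: sum_distrib_left)
qed

text \<open>If pulling back along \<open>G\<close> preserves solutions, then for every null
  \<open>k\<close> the Minkowski square of \<open>(k \<bullet> \<partial>\<^sub>i
  G)\<^sub>i\<close> vanishes: test the hypothesis with \<open>k \<bullet> x\<close> and \<open>(k
  \<bullet> x)\<^sup>2\<close>.\<close>

lemma pullback_null_quadric:
  fixes G :: "real^'m::finite \<Rightarrow> real^'m"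
  assumes G: "smooth G"
    and pres: "\<And>\<phi>. smooth \<phi> \<Longrightarrow> \<forall>x. wave t \<phi> x = 0 \<Longrightarrow> \<forall>y. wave t (\<phi> \<circ> G) y = 0"
    and null: "mink t k k = 0"
  shows "(\<Sum>i\<in>UNIV. msign t i * (k \<bullet> pd i G y) * (k \<bullet> pd i G y)) = 0"
proof -
  let ?u = "\<lambda>y. k \<bullet> G y"
  have u: "smooth ?u"
    using smooth_bounded_linear_comp[OF G bounded_linear_inner_right] .
  have "\<forall>y. wave t ((\<lambda>x. k \<bullet> x) \<circ> G) y = 0"
    by (rule pres) (use smooth_quadratic[of 0 k 0 0] wave_linear[of t k] in auto)
  then have wave_u: "wave t ?u y = 0" by (simp add: o_def)
  have "\<forall>y. wave t ((\<lambda>x. (k \<bullet> x) * (k \<bullet> x)) \<circ> G) y = 0"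
    by (rule pres) (use smooth_quadratic[of 0 0 k k] wave_linear_square[of t k] null in auto)
  then have "wave t (\<lambda>y. ?u y * ?u y) y = 0" by (simp add: o_def)
  moreover have "pd i ?u y = k \<bullet> pd i G y" for i
    using pd_bounded_linear_comp[OF smoothD(1)[OF G] bounded_linear_inner_right] .
  ultimately show ?thesis
    using wave_square[OF u, of t y] wave_u by simp
qed

lemma jrow_inner:
  fixes F :: "real^'m::finite \<Rightarrow> real^'m"
  assumes "F differentiable (at x)"
  shows "jrow F i x \<bullet> v = frechet_derivative F (at x) v $ i"
proof -
  let ?F' = "frechet_derivative F (at x)"
  have "linear ?F'"
    using has_derivative_linear assms[unfolded frechet_derivative_works] .
  then have "Vector_Spaces.linear (*s) (*s) ?F'"
    by (simp add: linear_def scalar_mult_eq_scaleR)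
  from Cartesian_Space.linear_componentwise[OF this]
  have "?F' v $ i = (\<Sum>l\<in>UNIV. v $ l * ?F' (axis l 1) $ i)" .
  moreover have "jrow F i x $ l = ?F' (axis l 1) $ i" for l
    unfolding jrow_def using pd_bounded_linear_comp[OF assms bounded_linear_vec_nth]
    by (simp add: pd_def)
  ultimately show ?thesis
    by (simp add: inner_vec_def mult.commute)
qed

text \<open>Chain rule for \<open>F \<circ> G = id\<close>: the rows of \<open>DF\<close> at
  \<open>G y\<close> are dual to the columns \<open>\<partial>\<^sub>j G\<close> of
  \<open>DG\<close> at \<open>y\<close>.\<close>

lemma jacobian_rows_columns_dual:
  fixes F G :: "real^'m::finite \<Rightarrow> real^'m"
  assumes F: "smooth F" and G: "smooth G" and FG: "\<And>y. F (G y) = y"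
  shows "jrow F i (G y) \<bullet> pd j G y = (if i = j then 1 else 0)"
proof -
  have "F \<circ> G = id" using FG by (simp add: fun_eq_iff)
  then have "id = frechet_derivative F (at (G y)) \<circ> frechet_derivative G (at y)"
    using frechet_derivative_compose[OF smoothD(1)[OF G] smoothD(1)[OF F]] by simp
  then have "frechet_derivative F (at (G y)) (pd j G y) = axis j 1"
    unfolding pd_def by (metis id_apply o_apply)
  then show ?thesis
    using jrow_inner[OF smoothD(1)[OF F]] by (simp add: axis_def)
qed

lemma mink_add_left: "mink t (u + v) w = mink t u w + mink t v w"
  and mink_add_right: "mink t w (u + v) = mink t w u + mink t w v"
  and mink_diff_left: "mink t (u - v) w = mink t u w - mink t v w"
  and mink_diff_right: "mink t w (u - v) = mink t w u - mink t w v"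
  and mink_scale_left: "mink t (c *\<^sub>R u) w = c * mink t u w"
  and mink_scale_right: "mink t w (c *\<^sub>R u) = c * mink t w u"
  unfolding mink_def
  by (simp_all add: algebra_simps sum.distrib sum_subtractf sum_distrib_left)

lemma mink_commute: "mink t u v = mink t v u"
  unfolding mink_def by (simp add: mult_ac)

lemma mink_axis: "mink t (axis p 1) (axis q 1) = (if p = q then msign t p else 0)"
proof -
  have "msign t j * axis p 1 $ j * axis q 1 $ j = (if j = p then (if p = q then msign t p else 0) else 0)" for j
    by (simp add: axis_def)
  then show ?thesis unfolding mink_def by simp
qed

lemma mink_nonneg_spatial: "w $ t = 0 \<Longrightarrow> mink t w w \<ge> 0"
  unfolding mink_def by (rule sum_nonneg) auto

lemma mink_time_plus_space:
  "a \<noteq> t \<Longrightarrow> mink t (axis t 1 + c *\<^sub>R axis a 1) (axis t 1 + c *\<^sub>R axis a 1) = c * c - 1"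
  by (simp add: mink_add_left mink_add_right mink_scale_left mink_scale_right mink_axis)

lemma mink_time_plus_two_spaces:
  "a \<noteq> t \<Longrightarrow> b \<noteq> t \<Longrightarrow> a \<noteq> b \<Longrightarrow>
   mink t (axis t 1 + c *\<^sub>R axis a 1 + d *\<^sub>R axis b 1) (axis t 1 + c *\<^sub>R axis a 1 + d *\<^sub>R axis b 1)
     = c * c + d * d - 1"
  by (simp add: mink_add_left mink_add_right mink_scale_left mink_scale_right mink_axis)

text \<open>Two Minkowski-orthogonal vectors cannot both be timelike: a suitable combination of
  them is spatial, hence has nonnegative square, yet that square is negative.\<close>

lemma no_two_orthogonal_timelike:
  assumes u: "mink t u u < 0" and v: "mink t v v < 0" and uv: "mink t u v = 0"
  shows False
proof -
  have "u $ t \<noteq> 0" using mink_nonneg_spatial[of u t] u by auto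
  let ?w = "(v $ t) *\<^sub>R u - (u $ t) *\<^sub>R v"
  have "?w $ t = 0" by (simp add: mult.commute)
  then have "mink t ?w ?w \<ge> 0" by (rule mink_nonneg_spatial)
  moreover have "mink t ?w ?w = (v $ t)\<^sup>2 * mink t u u + (u $ t)\<^sup>2 * mink t v v"
    using uv by (simp add: mink_diff_left mink_diff_right mink_scale_left mink_scale_right
        mink_commute[of t v u] power2_eq_square algebra_simps)
  moreover have "(u $ t)\<^sup>2 * mink t v v < 0"
    using \<open>u $ t \<noteq> 0\<close> v by (simp add: mult_pos_neg)
  moreover have "(v $ t)\<^sup>2 * mink t u u \<le> 0"
    using u by (simp add: mult_nonneg_nonpos)
  ultimately show False by linarith
qed

lemma weighted_square_sum_expand:
  fixes e x y z :: "'a \<Rightarrow> real"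
  shows "(\<Sum>i\<in>A. e i * (x i + c * y i + d * z i) * (x i + c * y i + d * z i)) =
    (\<Sum>i\<in>A. e i * x i * x i) + c * c * (\<Sum>i\<in>A. e i * y i * y i) + d * d * (\<Sum>i\<in>A. e i * z i * z i)
    + 2 * c * (\<Sum>i\<in>A. e i * x i * y i) + 2 * d * (\<Sum>i\<in>A. e i * x i * z i)
    + 2 * c * d * (\<Sum>i\<in>A. e i * y i * z i)"
proof -
  have "e i * (x i + c * y i + d * z i) * (x i + c * y i + d * z i) =
    e i * x i * x i + c * c * (e i * y i * y i) + d * d * (e i * z i * z i)
    + 2 * c * (e i * x i * y i) + 2 * d * (e i * x i * z i) + 2 * c * d * (e i * y i * z i)" for i
    by algebra
  then show ?thesis by (simp add: sum.distrib sum_distrib_left)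
qed

text \<open>A quadratic form \<open>k \<mapsto> \<Sum>\<^sub>i \<eta>\<^sub>i (k \<bullet>
  g\<^sub>i)\<^sup>2\<close> vanishing on the light cone is a multiple of the Minkowski form:
  evaluating on the null vectors \<open>e\<^sub>t \<plusminus> e\<^sub>a\<close> and
  \<open>e\<^sub>t + 3/5 e\<^sub>a + 4/5 e\<^sub>b\<close> determines all its
  coefficients.\<close>

lemma light_cone_quadric:
  fixes g :: "'m::finite \<Rightarrow> real^'m"
  assumes Q: "\<And>k. mink t k k = 0 \<Longrightarrow> (\<Sum>i\<in>UNIV. msign t i * (k \<bullet> g i) * (k \<bullet> g i)) = 0"
  shows "\<exists>c. \<forall>a b. (\<Sum>i\<in>UNIV. msign t i * g i $ a * g i $ b) = c * (if a = b then msign t a else 0)"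
proof -
  define S where "S a b = (\<Sum>i\<in>UNIV. msign t i * g i $ a * g i $ b)" for a b
  have null_dir: "S t t + c * c * S a a + d * d * S b b + 2 * c * S t a + 2 * d * S t b + 2 * c * d * S a b = 0"
    if "mink t (axis t 1 + c *\<^sub>R axis a 1 + d *\<^sub>R axis b 1) (axis t 1 + c *\<^sub>R axis a 1 + d *\<^sub>R axis b 1) = 0"
    for a b c d
  proof -
    have "(axis t 1 + c *\<^sub>R axis a 1 + d *\<^sub>R axis b 1) \<bullet> g i = g i $ t + c * g i $ a + d * g i $ b" for i
      by (simp add: inner_add_left inner_axis')
    then show ?thesis
      using Q[OF that]
        weighted_square_sum_expand[of "msign t" "\<lambda>i. g i $ t" c "\<lambda>i. g i $ a" d "\<lambda>i. g i $ b" UNIV]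
      unfolding S_def by simp
  qed
  have time_space: "S t a = 0" "S a a = - S t t" if "a \<noteq> t" for a
    using null_dir[where a = a and b = a and c = 1 and d = 0]
      null_dir[where a = a and b = a and c = "-1" and d = 0] mink_time_plus_space[OF that, of 1] mink_time_plus_space[OF that, of "-1"] by simp_all
  have space_space: "S a b = 0" if "a \<noteq> t" "b \<noteq> t" "a \<noteq> b" for a b
    using null_dir[where a = a and b = b and c = "3/5" and d = "4/5"]
      mink_time_plus_two_spaces[OF that, of "3/5" "4/5"] time_space that by simp
  have "S a b = - S t t * (if a = b then msign t a else 0)" for a b
    using time_space[of a] time_space[of b] space_space[of a b]
    by (cases "a = t"; cases "b = t"; cases "a = b") (auto simp: S_def mult_ac)
  then show ?thesis unfolding S_def by blast
qed

text \<open>If \<open>M E M\<^sup>T = c E\<close> for a diagonal weight matrix \<open>E\<close>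
  and \<open>P M = 1\<close>, then \<open>c P E P\<^sup>T = E\<close>, written with the rows
  \<open>r\<^sub>i\<close> of \<open>P\<close> and the columns \<open>g\<^sub>j\<close> of
  \<open>M\<close>.\<close>

lemma inverse_conformal:
  fixes r g :: "'m::finite \<Rightarrow> real^'m" and e :: "'m \<Rightarrow> real"
  assumes dual: "\<And>i j. r i \<bullet> g j = (if i = j then 1 else 0)"
    and conf: "\<And>a b. (\<Sum>j\<in>UNIV. e j * g j $ a * g j $ b) = c * (if a = b then e a else 0)"
  shows "c * (\<Sum>l\<in>UNIV. e l * r i $ l * r k $ l) = (if i = k then e i else 0)"
proof -
  have "(if i = k then e i else 0)
      = (\<Sum>j\<in>UNIV. e j * (if i = j then 1 else 0) * (if k = j then 1 else 0))"
  proof -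
    have "e j * (if i = j then 1 else 0) * (if k = j then 1 else 0)
        = (if j = i then (if i = k then e i else 0) else 0)" for j
      by auto
    then show ?thesis by simp
  qed
  also have "\<dots> = (\<Sum>j\<in>UNIV. e j * (\<Sum>a\<in>UNIV. r i $ a * g j $ a) * (\<Sum>b\<in>UNIV. r k $ b * g j $ b))"
    by (simp only: dual[symmetric] inner_vec_def inner_real_def)
  also have "\<dots> = (\<Sum>j\<in>UNIV. \<Sum>a\<in>UNIV. \<Sum>b\<in>UNIV. r i $ a * r k $ b * (e j * g j $ a * g j $ b))"
    by (simp add: sum_product sum_distrib_left mult_ac)
  also have "\<dots> = (\<Sum>a\<in>UNIV. \<Sum>b\<in>UNIV. \<Sum>j\<in>UNIV. r i $ a * r k $ b * (e j * g j $ a * g j $ b))"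
    by (subst sum.swap, subst (2) sum.swap, rule refl)
  also have "\<dots> = (\<Sum>a\<in>UNIV. \<Sum>b\<in>UNIV. r i $ a * r k $ b * (c * (if a = b then e a else 0)))"
    by (simp add: sum_distrib_left[symmetric] conf)
  also have "\<dots> = c * (\<Sum>l\<in>UNIV. e l * r i $ l * r k $ l)"
    by (simp add: if_distrib if_distribR sum_distrib_left mult_ac cong: if_cong)
  finally show ?thesis ..
qed

lemma two_spatial_indices:
  fixes t :: "'m::finite"
  assumes "CARD('m) \<ge> 3"
  obtains a b :: 'm where "a \<noteq> t" "b \<noteq> t" "a \<noteq> b"
proof -
  have "card (UNIV - {t}) \<ge> 2" using assms by (simp add: card_Diff_singleton)
  then have "UNIV - {t} \<noteq> {}" by (metis card.empty not_numeral_le_zero)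
  then obtain a where a: "a \<noteq> t" by auto
  have "card (UNIV - {t} - {a}) \<ge> 1"
    using \<open>card (UNIV - {t}) \<ge> 2\<close> a by (simp add: card_Diff_singleton)
  then have "UNIV - {t} - {a} \<noteq> {}" by (metis card.empty not_one_le_zero)
  then obtain b where "b \<noteq> t" "b \<noteq> a" by auto
  then show ?thesis using a that by blast
qed

text \<open>A frame that is Minkowski-orthonormal up to a common factor \<open>c\<close> has the
  causal character of the standard basis: in dimension at least three, \<open>c < 0\<close> would
  make two orthogonal spatial members timelike.\<close>

lemma conformal_frame_causal_character:
  fixes r :: "'m::finite \<Rightarrow> real^'m"
  assumes dim: "CARD('m) \<ge> 3"
    and "\<exists>c. \<forall>i k. c * mink t (r i) (r k) = (if i = k then msign t i else 0)"
  shows "(\<forall>i j. i \<noteq> j \<longrightarrow> mink t (r i) (r j) = 0) \<and>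
     (\<forall>i. i \<noteq> t \<longrightarrow> mink t (r i) (r i) = - mink t (r t) (r t)) \<and>
     (\<forall>i. i \<noteq> t \<longrightarrow> spacelike t (r i)) \<and>
     timelike t (r t)"
proof -
  obtain c where frame: "\<And>i k. c * mink t (r i) (r k) = (if i = k then msign t i else 0)"
    using assms(2) by blast
  have c0: "c \<noteq> 0" using frame[of t t] by auto
  have gram: "mink t (r i) (r k) = (if i = k then msign t i else 0) / c" for i k
    using frame[of i k] c0 by (simp add: field_simps)
  have "c > 0"
  proof (rule ccontr)
    assume "\<not> c > 0"
    then have "c < 0" using c0 by simp
    obtain a b where ab: "a \<noteq> t" "b \<noteq> t" "a \<noteq> b" using two_spatial_indices[OF dim] .
    have "mink t (r a) (r a) < 0" "mink t (r b) (r b) < 0" "mink t (r a) (r b) = 0"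
      using gram[of a a] gram[of b b] gram[of a b] ab \<open>c < 0\<close> by simp_all
    then show False by (rule no_two_orthogonal_timelike)
  qed
  then show ?thesis
    unfolding spacelike_def timelike_def gram by simp
qed

theorem theorem2p1:
  fixes F G :: "real^'m::finite \<Rightarrow> real^'m" and t :: 'm
  assumes dim: "CARD('m) \<ge> 3"
    and smF: "smooth F" and smG: "smooth G"
    and inv1: "\<forall>x. G (F x) = x" and inv2: "\<forall>y. F (G y) = y"
    and wave_pres: "\<forall>\<phi> :: real^'m \<Rightarrow> real. smooth \<phi> \<longrightarrow>
        ((\<forall>x. wave t \<phi> x = 0) \<longleftrightarrow> (\<forall>y. wave t (\<phi> \<circ> G) y = 0))"
  shows "\<forall>x.
     (\<forall>i j. i \<noteq> j \<longrightarrow> mink t (jrow F i x) (jrow F j x) = 0) \<and>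
     (\<forall>i. i \<noteq> t \<longrightarrow> mink t (jrow F i x) (jrow F i x) = - mink t (jrow F t x) (jrow F t x)) \<and>
     (\<forall>i. i \<noteq> t \<longrightarrow> spacelike t (jrow F i x)) \<and>
     timelike t (jrow F t x)"
proof -
  have pres: "\<And>\<phi>. smooth \<phi> \<Longrightarrow> \<forall>x. wave t \<phi> x = 0 \<Longrightarrow> \<forall>y. wave t (\<phi> \<circ> G) y = 0"
    using wave_pres by blast
  have frame: "\<exists>c. \<forall>i k. c * mink t (jrow F i x) (jrow F k x) = (if i = k then msign t i else 0)"
    for x
  proof -
    define y where "y = F x"
    have Gy: "G y = x" using inv1 by (simp add: y_def)
    obtain c where conf:
      "\<And>a b. (\<Sum>j\<in>UNIV. msign t j * pd j G y $ a * pd j G y $ b) = c * (if a = b then msign t a else 0)"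
      using light_cone_quadric[of t "\<lambda>j. pd j G y"] pullback_null_quadric[OF smG pres] by blast
    have dual: "jrow F i x \<bullet> pd j G y = (if i = j then 1 else 0)" for i j
      using jacobian_rows_columns_dual[OF smF smG, of i y j] inv2 Gy by simp
    show ?thesis
      using inverse_conformal[where r = "\<lambda>i. jrow F i x", OF dual conf] unfolding mink_def by blast
  qed
  show ?thesis
    by (intro allI conformal_frame_causal_character[OF dim] frame)
qed

end
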